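(* In the setting of the context, assume in addition that $V_f$, all $V_{g_i}$ and all $V_{h_j}$ are convex. Let $\bar x\in\mathbb{R}^n$ and $\bar\sigma=(\bar\lambda,\bar\mu,\bar\sigma_f,\bar\sigma_g,\bar\sigma_h)$ satisfy the critical-point conditions (i) $\nabla_x\Xi_1(\bar x,\bar\sigma)=0$; (ii) $\Lambda_f(\bar x)=\nabla V_f^*(\bar\sigma_f)$, $\Lambda_{g_i}(\bar x)=\nabla V_{g_i}^*(\bar\sigma_{g_i})$ for all $i$, $\Lambda_{h_j}(\bar x)=\nabla V_{h_j}^*(\bar\sigma_{h_j})$ for all $j$; (iii) $h(\bar x)=0$, $\bar\lambda\ge0$, $g(\bar x)\le0$, $\bar\lambda^Tg(\bar x)=0$. Suppose $\bar\sigma\in\mathcal S_a^+$ and $\mathcal S_a^+$ is convex. Then $\bar\sigma$ is a global maximizer of $P^d$ on $\mathcal S_a^+$, $\bar x$ is a global minimizer of $f$ on $\mathcal X_a$, and $$f(\bar x)=\min_{x\in\mathcal X_a}f(x)=\max_{\sigma\in\mathcal S_a^+}P^d(\sigma)=P^d(\bar\sigma).$$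
   Context: Problem: minimize $f(x)$ subject to $g_i(x)\le0$ ($i=1,\dots,m$), $h_j(x)=0$ ($j=1,\dots,p$); $g=(g_1,\dots,g_m)$, $h=(h_1,\dots,h_p)$, feasible set $\mathcal X_a=\{x\in\mathbb{R}^n: g(x)\le0,\ h(x)=0\}$. Structural assumption: $f(x)=V_f(\Lambda_f(x))+\tfrac12x^TAx-c^Tx$ with $A$ symmetric, $c\in\mathbb{R}^n$; $g_i(x)=V_{g_i}(\Lambda_{g_i}(x))$; $h_j(x)=V_{h_j}(\Lambda_{h_j}(x))$, where $\Lambda_f:\mathbb{R}^n\to\mathbb{R}^{k_f}$, $\Lambda_{g_i}:\mathbb{R}^n\to\mathbb{R}^{k_i}$, $\Lambda_{h_j}:\mathbb{R}^n\to\mathbb{R}^{l_j}$ are quadratic maps (components are polynomials of degree at most 2). Each $V\in\{V_f,V_{g_i},V_{h_j}\}$ is a "canonical function": differentiable on an open set $E\subseteq\mathbb{R}^k$ containing the image of the corresponding $\Lambda$, with $\nabla V:E\to E^*$ a bijection onto an open set $E^*$, and Legendre conjugate $V^*:E^*\to\mathbb{R}$, $V^*(\sigma)=\sigma^T\xi-V(\xi)$, $\xi=(\nabla V)^{-1}(\sigma)$, differentiable with $\nabla V^*=(\nabla V)^{-1}$. Total complementarity function: for $\sigma=(\lambda,\mu,\sigma_f,\sigma_g,\sigma_h)$ with $\lambda\in\mathbb{R}^m$, $\mu\in\mathbb{R}^p$, $\sigma_f\in E_f^*$, $\sigma_{g_i}\in E_{g_i}^*$, $\sigma_{h_j}\in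 E_{h_j}^*$, $$\Xi_1(x,\sigma)=\Lambda_f(x)^T\sigma_f-V_f^*(\sigma_f)+\sum_i\lambda_i\big[\Lambda_{g_i}(x)^T\sigma_{g_i}-V_{g_i}^*(\sigma_{g_i})\big]+\sum_j\mu_j\big[\Lambda_{h_j}(x)^T\sigma_{h_j}-V_{h_j}^*(\sigma_{h_j})\big]+\tfrac12x^TAx-c^Tx.$$ $G(\sigma)=\nabla_x^2\Xi_1(x,\sigma)$ (independent of $x$). $P^d(\sigma)$ is the value of $\Xi_1(\cdot,\sigma)$ at any of its stationary points in $x$ (equivalently $U^\Lambda(\sigma)-V_f^*(\sigma_f)-\sum_i\lambda_iV_{g_i}^*(\sigma_{g_i})-\sum_j\mu_jV_{h_j}^*(\sigma_{h_j})$, where $U^\Lambda(\sigma)$ is the stationary value in $x$ of $\Lambda_f(x)^T\sigma_f+\sum_i\lambda_i\Lambda_{g_i}(x)^T\sigma_{g_i}+\sum_j\mu_j\Lambda_{h_j}(x)^T\sigma_{h_j}+\tfrac12x^TAx-c^Tx$). Dual feasible space $\mathcal S_a$: the set of such $\sigma$ with $\lambda_i\ge0$ for all $i$, $\mu_j\neq0$ for all $j$, and for which $\Xi_1(\cdot,\sigma)$ has a stationary point. Define $\mathcal S_a^+=\{\sigma\in\mathcal S_a: G(\sigma)\succ0,\ \mu_j>0\ \forall j=1,\dots,p\}$. *)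

theory Defs
  imports "HOL-Analysis.Analysis"
begin

section \<open>The spaces R^k, represented as functions nat => real vanishing from index k on\<close>

definition Rk :: "nat \<Rightarrow> (nat \<Rightarrow> real) set" where
  "Rk k = {v. \<forall>l\<ge>k. v l = 0}"

definition dotk :: "nat \<Rightarrow> (nat \<Rightarrow> real) \<Rightarrow> (nat \<Rightarrow> real) \<Rightarrow> real" where
  "dotk k u v = (\<Sum>l<k. u l * v l)"

definition normk :: "nat \<Rightarrow> (nat \<Rightarrow> real) \<Rightarrow> real" where
  "normk k v = sqrt (dotk k v v)"

definition openk :: "nat \<Rightarrow> (nat \<Rightarrow> real) set \<Rightarrow> bool" where
  "openk k E \<longleftrightarrow> E \<subseteq> Rk k \<and>
     (\<forall>\<xi>\<in>E. \<exists>e>0. \<forall>\<eta>\<in>Rk k. normk k (\<lambda>l. \<eta> l - \<xi> l) < e \<longrightarrow> \<eta> \<in> E)"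

definition has_gradk :: "nat \<Rightarrow> ((nat \<Rightarrow> real) \<Rightarrow> real) \<Rightarrow> (nat \<Rightarrow> real) \<Rightarrow> (nat \<Rightarrow> real) \<Rightarrow> bool" where
  "has_gradk k F d \<xi> \<longleftrightarrow> d \<in> Rk k \<and>
     (\<forall>e>0. \<exists>\<delta>>0. \<forall>t\<in>Rk k. normk k t < \<delta> \<longrightarrow>
        \<bar>F (\<lambda>l. \<xi> l + t l) - F \<xi> - dotk k d t\<bar> \<le> e * normk k t)"

definition legendre_conj :: "nat \<Rightarrow> (nat \<Rightarrow> real) set \<Rightarrow> ((nat \<Rightarrow> real) \<Rightarrow> (nat \<Rightarrow> real))
                      \<Rightarrow> ((nat \<Rightarrow> real) \<Rightarrow> real) \<Rightarrow> (nat \<Rightarrow> real) \<Rightarrow> real" where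
  "legendre_conj k E dV V \<sigma> = (let \<xi> = inv_into E dV \<sigma> in dotk k \<sigma> \<xi> - V \<xi>)"

definition canonical :: "nat \<Rightarrow> (nat \<Rightarrow> real) set \<Rightarrow> (nat \<Rightarrow> real) set
                         \<Rightarrow> ((nat \<Rightarrow> real) \<Rightarrow> real) \<Rightarrow> ((nat \<Rightarrow> real) \<Rightarrow> (nat \<Rightarrow> real)) \<Rightarrow> bool" where
  "canonical k E Es V dV \<longleftrightarrow> openk k E \<and> openk k Es \<and>
     (\<forall>\<xi>\<in>E. has_gradk k V (dV \<xi>) \<xi>) \<and> bij_betw dV E Es \<and>
     (\<forall>\<sigma>\<in>Es. has_gradk k (legendre_conj k E dV V) (inv_into E dV \<sigma>) \<sigma>)"

definition convex_fun_k :: "(nat \<Rightarrow> real) set \<Rightarrow> ((nat \<Rightarrow> real) \<Rightarrow> real) \<Rightarrow> bool" where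
  "convex_fun_k E V \<longleftrightarrow> (\<forall>\<xi>\<in>E. \<forall>\<eta>\<in>E. \<forall>\<theta>::real. 0 \<le> \<theta> \<and> \<theta> \<le> 1 \<longrightarrow>
      (\<lambda>l. \<theta> * \<xi> l + (1 - \<theta>) * \<eta> l) \<in> E \<and>
      V (\<lambda>l. \<theta> * \<xi> l + (1 - \<theta>) * \<eta> l) \<le> \<theta> * V \<xi> + (1 - \<theta>) * V \<eta>)"

section \<open>Quadratic maps R^n -> R^k, given by coefficients (Q_l, b_l, c_l), l < k:
  component l is x^T Q_l x + b_l^T x + c_l\<close>

type_synonym 'n qmap = "(nat \<Rightarrow> real^'n^'n) \<times> (nat \<Rightarrow> real^'n) \<times> (nat \<Rightarrow> real)"

definition qeval :: "nat \<Rightarrow> 'n::finite qmap \<Rightarrow> real^'n \<Rightarrow> (nat \<Rightarrow> real)" where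
  "qeval k L x = (case L of (Q, b, c) \<Rightarrow>
      (\<lambda>l. if l < k then x \<bullet> (Q l *v x) + b l \<bullet> x + c l else 0))"

text \<open>Hessian (in x) of x \<mapsto> qeval k L x ^T sigma.\<close>
definition qhess :: "nat \<Rightarrow> 'n::finite qmap \<Rightarrow> (nat \<Rightarrow> real) \<Rightarrow> real^'n^'n" where
  "qhess k L \<sigma> = (case L of (Q, b, c) \<Rightarrow>
      (\<Sum>l<k. \<sigma> l *\<^sub>R (Q l + transpose (Q l))))"

text \<open>Dual variable sigma = (lambda, mu, sigma_f, sigma_g, sigma_h).\<close>
type_synonym dualv = "(nat \<Rightarrow> real) \<times> (nat \<Rightarrow> real) \<times> (nat \<Rightarrow> real) \<times> (nat \<Rightarrow> nat \<Rightarrow> real) \<times> (nat \<Rightarrow> nat \<Rightarrow> real)"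

definition dcomb :: "real \<Rightarrow> dualv \<Rightarrow> dualv \<Rightarrow> dualv" where
  "dcomb \<theta> s t = (case s of (la1, \<mu>1, sf1, sg1, sh1) \<Rightarrow> case t of (la2, \<mu>2, sf2, sg2, sh2) \<Rightarrow>
     ((\<lambda>i. \<theta> * la1 i + (1 - \<theta>) * la2 i), (\<lambda>j. \<theta> * \<mu>1 j + (1 - \<theta>) * \<mu>2 j),
      (\<lambda>l. \<theta> * sf1 l + (1 - \<theta>) * sf2 l),
      (\<lambda>i l. \<theta> * sg1 i l + (1 - \<theta>) * sg2 i l),
      (\<lambda>j l. \<theta> * sh1 j l + (1 - \<theta>) * sh2 j l)))"

definition convex_dual :: "dualv set \<Rightarrow> bool" where
  "convex_dual S \<longleftrightarrow> (\<forall>s\<in>S. \<forall>t\<in>S. \<forall>\<theta>::real. 0 \<le> \<theta> \<and> \<theta> \<le> 1 \<longrightarrow> dcomb \<theta> s t \<in> S)"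

definition Xi1 :: "real^'n^'n \<Rightarrow> real^'n \<Rightarrow> nat \<Rightarrow> nat \<Rightarrow>
    nat \<Rightarrow> 'n::finite qmap \<Rightarrow> (nat \<Rightarrow> real) set \<Rightarrow> ((nat \<Rightarrow> real) \<Rightarrow> (nat \<Rightarrow> real)) \<Rightarrow> ((nat \<Rightarrow> real) \<Rightarrow> real) \<Rightarrow>
    (nat \<Rightarrow> nat) \<Rightarrow> (nat \<Rightarrow> 'n qmap) \<Rightarrow> (nat \<Rightarrow> (nat \<Rightarrow> real) set) \<Rightarrow> (nat \<Rightarrow> (nat \<Rightarrow> real) \<Rightarrow> (nat \<Rightarrow> real)) \<Rightarrow> (nat \<Rightarrow> (nat \<Rightarrow> real) \<Rightarrow> real) \<Rightarrow>
    (nat \<Rightarrow> nat) \<Rightarrow> (nat \<Rightarrow> 'n qmap) \<Rightarrow> (nat \<Rightarrow> (nat \<Rightarrow> real) set) \<Rightarrow> (nat \<Rightarrow> (nat \<Rightarrow> real) \<Rightarrow> (nat \<Rightarrow> real)) \<Rightarrow> (nat \<Rightarrow> (nat \<Rightarrow> real) \<Rightarrow> real) \<Rightarrow>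
    real^'n \<Rightarrow> dualv \<Rightarrow> real" where
  "Xi1 A c m p kf Lf Ef dVf Vf kg Lg Eg dVg Vg kh Lh Eh dVh Vh x s =
    (case s of (la, \<mu>, sf, sg, sh) \<Rightarrow>
       dotk kf (qeval kf Lf x) sf - legendre_conj kf Ef dVf Vf sf
     + (\<Sum>i<m. la i * (dotk (kg i) (qeval (kg i) (Lg i) x) (sg i) - legendre_conj (kg i) (Eg i) (dVg i) (Vg i) (sg i)))
     + (\<Sum>j<p. \<mu> j * (dotk (kh j) (qeval (kh j) (Lh j) x) (sh j) - legendre_conj (kh j) (Eh j) (dVh j) (Vh j) (sh j)))
     + (1/2) * (x \<bullet> (A *v x)) - c \<bullet> x)"

text \<open>G(sigma) = Hessian of Xi_1(., sigma) in x.\<close>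
definition Gmat :: "real^'n^'n \<Rightarrow> nat \<Rightarrow> nat \<Rightarrow> nat \<Rightarrow> 'n::finite qmap \<Rightarrow>
    (nat \<Rightarrow> nat) \<Rightarrow> (nat \<Rightarrow> 'n qmap) \<Rightarrow> (nat \<Rightarrow> nat) \<Rightarrow> (nat \<Rightarrow> 'n qmap) \<Rightarrow> dualv \<Rightarrow> real^'n^'n" where
  "Gmat A m p kf Lf kg Lg kh Lh s = (case s of (la, \<mu>, sf, sg, sh) \<Rightarrow>
      qhess kf Lf sf + (\<Sum>i<m. la i *\<^sub>R qhess (kg i) (Lg i) (sg i))
      + (\<Sum>j<p. \<mu> j *\<^sub>R qhess (kh j) (Lh j) (sh j)) + A)"

definition pos_def :: "real^'n^'n \<Rightarrow> bool" where
  "pos_def M \<longleftrightarrow> (\<forall>y. y \<noteq> 0 \<longrightarrow> y \<bullet> (M *v y) > 0)"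


definition stationary :: "(real^'n::finite \<Rightarrow> dualv \<Rightarrow> real) \<Rightarrow> dualv \<Rightarrow> real^'n \<Rightarrow> bool" where
  "stationary Xi s x \<longleftrightarrow> ((\<lambda>y. Xi y s) has_derivative (\<lambda>h. 0)) (at x)"

definition Pd :: "(real^'n::finite \<Rightarrow> dualv \<Rightarrow> real) \<Rightarrow> dualv \<Rightarrow> real" where
  "Pd Xi s = Xi (SOME x. stationary Xi s x) s"

text \<open>Dual feasible space S_a. Components beyond the dimensions are normalised to 0.\<close>
definition Sa :: "nat \<Rightarrow> nat \<Rightarrow> (nat \<Rightarrow> real) set \<Rightarrow> (nat \<Rightarrow> (nat \<Rightarrow> real) set) \<Rightarrow> (nat \<Rightarrow> (nat \<Rightarrow> real) set)
      \<Rightarrow> (real^'n::finite \<Rightarrow> dualv \<Rightarrow> real) \<Rightarrow> dualv set" where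
  "Sa m p Efs Egs Ehs Xi = {s. case s of (la, \<mu>, sf, sg, sh) \<Rightarrow>
      (\<forall>i<m. la i \<ge> 0) \<and> (\<forall>j<p. \<mu> j \<noteq> 0) \<and>
      sf \<in> Efs \<and> (\<forall>i<m. sg i \<in> Egs i) \<and> (\<forall>j<p. sh j \<in> Ehs j) \<and>
      (\<forall>i\<ge>m. la i = 0 \<and> sg i = (\<lambda>l. 0)) \<and> (\<forall>j\<ge>p. \<mu> j = 0 \<and> sh j = (\<lambda>l. 0)) \<and>
      (\<exists>x. stationary Xi s x)}"

definition Sa_plus :: "nat \<Rightarrow> nat \<Rightarrow> (nat \<Rightarrow> real) set \<Rightarrow> (nat \<Rightarrow> (nat \<Rightarrow> real) set) \<Rightarrow> (nat \<Rightarrow> (nat \<Rightarrow> real) set)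
      \<Rightarrow> (real^'n::finite \<Rightarrow> dualv \<Rightarrow> real) \<Rightarrow> (dualv \<Rightarrow> real^'n^'n) \<Rightarrow> dualv set" where
  "Sa_plus m p Efs Egs Ehs Xi G = {s \<in> Sa m p Efs Egs Ehs Xi.
      pos_def (G s) \<and> (\<forall>j<p. fst (snd s) j > 0)}"

end

theory Submission
  imports Defs
begin

(*
  For fixed \<sigma>, \<Xi>\<^sub>1(\<cdot>, \<sigma>) is a quadratic function of x with Hessian G(\<sigma>), so for
  G(\<sigma>) \<succ> 0 its stationary points are global minimizers and P\<^sup>d(\<sigma>) = min\<^sub>x \<Xi>\<^sub>1(x, \<sigma>).
  For convex V the gradient inequality yields the Fenchel-Young inequality
  \<xi>\<^sup>T\<sigma> - V\<^sup>*(\<sigma>) \<le> V(\<xi>), hence \<Xi>\<^sub>1(x, \<sigma>) \<le> f(x) for feasible x and \<lambda>, \<mu> \<ge> 0;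
  at the critical point, \<Lambda>(x\<^sub>b) = \<nabla>V\<^sup>*(\<sigma>\<^sub>b) forces \<Lambda>(x\<^sub>b) = (\<nabla>V)\<^sup>-\<^sup>1(\<sigma>\<^sub>b) by uniqueness
  of gradients, so all these inequalities are equalities and \<Xi>\<^sub>1(x\<^sub>b, \<sigma>\<^sub>b) = f(x\<^sub>b). Then
    P\<^sup>d(\<sigma>) \<le> \<Xi>\<^sub>1(x\<^sub>b, \<sigma>) \<le> f(x\<^sub>b) = \<Xi>\<^sub>1(x\<^sub>b, \<sigma>\<^sub>b) = P\<^sup>d(\<sigma>\<^sub>b)   and   f(x\<^sub>b) = \<Xi>\<^sub>1(x\<^sub>b, \<sigma>\<^sub>b) \<le> \<Xi>\<^sub>1(x, \<sigma>\<^sub>b) \<le> f(x).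
*)

section \<open>Quadratic functions\<close>

definition quadratic_fun :: "(real^'n::finite \<Rightarrow> real) \<Rightarrow> (real^'n \<Rightarrow> real) \<Rightarrow> bool" where
  "quadratic_fun F C \<longleftrightarrow>
     (\<forall>x d t. F (x + t *\<^sub>R d) = F x + t * (F (x + d) - F x - C d) + t\<^sup>2 * C d)"

lemma quadratic_fun_cong:
  "quadratic_fun F C \<Longrightarrow> (\<And>x. F x = F' x) \<Longrightarrow> (\<And>d. C d = C' d) \<Longrightarrow> quadratic_fun F' C'"
  unfolding quadratic_fun_def by simp

lemma quadratic_fun_const: "quadratic_fun (\<lambda>x. a) (\<lambda>d. 0)"
  unfolding quadratic_fun_def by simp

lemma quadratic_fun_add:
  assumes "quadratic_fun F C" "quadratic_fun G D"
  shows "quadratic_fun (\<lambda>x. F x + G x) (\<lambda>d. C d + D d)"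
  unfolding quadratic_fun_def assms[unfolded quadratic_fun_def, rule_format]
  by (simp add: algebra_simps)

lemma quadratic_fun_diff:
  assumes "quadratic_fun F C" "quadratic_fun G D"
  shows "quadratic_fun (\<lambda>x. F x - G x) (\<lambda>d. C d - D d)"
  unfolding quadratic_fun_def assms[unfolded quadratic_fun_def, rule_format]
  by (simp add: algebra_simps)

lemma quadratic_fun_cmult:
  assumes "quadratic_fun F C"
  shows "quadratic_fun (\<lambda>x. a * F x) (\<lambda>d. a * C d)"
  unfolding quadratic_fun_def assms[unfolded quadratic_fun_def, rule_format]
  by (simp add: algebra_simps)

lemma quadratic_fun_sum:
  "finite S \<Longrightarrow> (\<And>i. i \<in> S \<Longrightarrow> quadratic_fun (F i) (C i)) \<Longrightarrow>
   quadratic_fun (\<lambda>x. \<Sum>i\<in>S. F i x) (\<lambda>d. \<Sum>i\<in>S. C i d)"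
  by (induction S rule: finite_induct) (auto intro: quadratic_fun_const quadratic_fun_add)

lemma quadratic_fun_quadform: "quadratic_fun (\<lambda>x. x \<bullet> (Q *v x)) (\<lambda>d. d \<bullet> (Q *v d))"
  unfolding quadratic_fun_def
  by (simp add: algebra_simps inner_add_left inner_add_right power2_eq_square)

lemma quadratic_fun_inner: "quadratic_fun (\<lambda>x. b \<bullet> x) (\<lambda>d. 0)"
  unfolding quadratic_fun_def by (simp add: algebra_simps inner_add_right)

lemma quadform_add: "(d::real^'n::finite) \<bullet> ((M + N) *v d) = d \<bullet> (M *v d) + d \<bullet> (N *v d)"
  by (simp add: matrix_vector_mult_add_rdistrib inner_add_right)

lemma quadform_scaleR: "(d::real^'n::finite) \<bullet> ((a *\<^sub>R M) *v d) = a * (d \<bullet> (M *v d))"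
  by (simp flip: scaleR_matrix_vector_assoc)

lemma quadform_sum: "finite S \<Longrightarrow> (d::real^'n::finite) \<bullet> ((\<Sum>i\<in>S. M i) *v d) = (\<Sum>i\<in>S. d \<bullet> (M i *v d))"
  by (induction S rule: finite_induct) (auto simp: quadform_add)

lemma quadform_vector_matrix: "(d::real^'n::finite) \<bullet> (d v* M) = d \<bullet> (M *v d)"
  using dot_lmul_matrix[of d M d] by (simp add: inner_commute)

lemma quadform_qhess: "d \<bullet> (qhess k L \<sigma> *v d) = 2 * (\<Sum>l<k. \<sigma> l * (d \<bullet> (fst L l *v d)))"
  by (cases L) (simp add: qhess_def quadform_sum quadform_scaleR quadform_add quadform_vector_matrix
      sum_distrib_left algebra_simps)

lemma quadratic_fun_dotk_qeval:
  "quadratic_fun (\<lambda>x. dotk k (qeval k L x) \<sigma>) (\<lambda>d. 1/2 * (d \<bullet> (qhess k L \<sigma> *v d)))"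
proof -
  obtain Q b c where L: "L = (Q, b, c)" by (cases L) auto
  have "quadratic_fun (\<lambda>x. \<Sum>l<k. \<sigma> l * (x \<bullet> (Q l *v x) + b l \<bullet> x + c l))
          (\<lambda>d. \<Sum>l<k. \<sigma> l * (d \<bullet> (Q l *v d) + 0 + 0))"
    by (intro quadratic_fun_sum quadratic_fun_cmult quadratic_fun_add quadratic_fun_quadform
        quadratic_fun_inner quadratic_fun_const) auto
  then show ?thesis
    by (rule quadratic_fun_cong)
      (auto simp: L dotk_def qeval_def quadform_qhess mult.commute intro!: sum.cong)
qed

lemma quadratic_fun_stationary_imp_min:
  assumes F: "quadratic_fun F C" and C: "\<And>d. C d \<ge> 0" and x: "(F has_derivative (\<lambda>h. 0)) (at x)"
  shows "F x \<le> F y"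
proof -
  define d where "d = y - x"
  define B where "B = F (x + d) - F x - C d"
  have line: "F (x + t *\<^sub>R d) = F x + t * B + t\<^sup>2 * C d" for t
    using F unfolding quadratic_fun_def B_def by auto
  have "((\<lambda>t::real. x + t *\<^sub>R d) has_derivative (\<lambda>t. t *\<^sub>R d)) (at 0)"
    by (auto intro!: derivative_eq_intros)
  moreover have "(F has_derivative (\<lambda>h. 0)) (at ((\<lambda>t::real. x + t *\<^sub>R d) 0))"
    using x by simp
  ultimately have "((\<lambda>t. F x + t * B + t\<^sup>2 * C d) has_derivative (\<lambda>h. 0)) (at 0)"
    by (auto dest: diff_chain_at simp: o_def line)
  then have "((\<lambda>t. F x + t * B + t\<^sup>2 * C d) has_real_derivative 0) (at 0)"
    by (simp add: has_field_derivative_def mult_zero_left[abs_def])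
  moreover have "((\<lambda>t. F x + t * B + t\<^sup>2 * C d) has_real_derivative B) (at 0)"
    by (auto intro!: derivative_eq_intros)
  ultimately have "B = 0" using DERIV_unique by blast
  then show ?thesis using C[of d] by (simp add: B_def d_def)
qed

section \<open>Gradients and the Fenchel-Young inequality\<close>

lemma dotk_commute: "dotk k u v = dotk k v u"
  unfolding dotk_def by (simp add: mult.commute)

lemma dotk_scale_right: "dotk k d (\<lambda>l. a * t l) = a * dotk k d t"
  unfolding dotk_def by (simp add: sum_distrib_left algebra_simps)

lemma dotk_diff_right: "dotk k d (\<lambda>l. u l - v l) = dotk k d u - dotk k d v"
  unfolding dotk_def by (simp add: sum_subtractf algebra_simps)

lemma dotk_self_nonneg: "0 \<le> dotk k t t"
  unfolding dotk_def by (intro sum_nonneg) simp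

lemma dotk_self_eq_0_imp_eq_0:
  assumes "t \<in> Rk k" "dotk k t t = 0"
  shows "t = (\<lambda>l. 0)"
proof
  fix l show "t l = 0"
  proof (cases "l < k")
    case True then show ?thesis using assms(2) by (simp add: dotk_def sum_nonneg_eq_0_iff)
  next
    case False then show ?thesis using assms(1) by (simp add: Rk_def)
  qed
qed

lemma normk_nonneg: "0 \<le> normk k t"
  unfolding normk_def using dotk_self_nonneg by simp

lemma normk_scale: "0 \<le> a \<Longrightarrow> normk k (\<lambda>l. a * t l) = a * normk k t"
  unfolding normk_def
  by (simp add: dotk_scale_right dotk_commute[of k "\<lambda>l. a * t l"] real_sqrt_mult)

lemma has_gradk_directional:
  assumes grad: "has_gradk k F d \<xi>" and t: "t \<in> Rk k"
  shows "((\<lambda>\<theta>. (F (\<lambda>l. \<xi> l + \<theta> * t l) - F \<xi>) / \<theta>) \<longlongrightarrow> dotk k d t) (at_right 0)"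
proof (rule tendstoI)
  fix e :: real assume e: "e > 0"
  define nt where "nt = normk k t"
  have nt: "0 \<le> nt" by (simp add: nt_def normk_nonneg)
  with e have "e / (nt + 1) > 0" by simp
  then obtain \<delta> where \<delta>: "\<delta> > 0" and H: "\<forall>s\<in>Rk k. normk k s < \<delta> \<longrightarrow>
      \<bar>F (\<lambda>l. \<xi> l + s l) - F \<xi> - dotk k d s\<bar> \<le> e / (nt + 1) * normk k s"
    using grad unfolding has_gradk_def by blast
  have "\<forall>\<^sub>F \<theta> in at_right 0. \<theta> \<in> {0<..<\<delta> / (nt + 1)}"
    using \<delta> nt by (intro eventually_at_right_real) simp
  then show "\<forall>\<^sub>F \<theta> in at_right 0. dist ((F (\<lambda>l. \<xi> l + \<theta> * t l) - F \<xi>) / \<theta>) (dotk k d t) < e"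
  proof (rule eventually_mono)
    fix \<theta> :: real assume \<theta>: "\<theta> \<in> {0<..<\<delta> / (nt + 1)}"
    have "normk k (\<lambda>l. \<theta> * t l) = \<theta> * nt" using \<theta> by (simp add: normk_scale nt_def)
    also have "\<dots> < \<delta>"
      using \<theta> nt by (simp add: field_simps)
    finally have "normk k (\<lambda>l. \<theta> * t l) < \<delta>" .
    moreover have "(\<lambda>l. \<theta> * t l) \<in> Rk k" using t by (simp add: Rk_def)
    ultimately have "\<bar>F (\<lambda>l. \<xi> l + \<theta> * t l) - F \<xi> - dotk k d (\<lambda>l. \<theta> * t l)\<bar>
        \<le> e / (nt + 1) * normk k (\<lambda>l. \<theta> * t l)"
      using H by simp
    then have bound: "\<bar>F (\<lambda>l. \<xi> l + \<theta> * t l) - F \<xi> - \<theta> * dotk k d t\<bar> \<le> e / (nt + 1) * (\<theta> * nt)"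
      using \<theta> by (simp add: dotk_scale_right normk_scale nt_def)
    have "(F (\<lambda>l. \<xi> l + \<theta> * t l) - F \<xi>) / \<theta> - dotk k d t
        = (F (\<lambda>l. \<xi> l + \<theta> * t l) - F \<xi> - \<theta> * dotk k d t) / \<theta>"
      using \<theta> by (simp add: diff_divide_distrib)
    then have "\<bar>(F (\<lambda>l. \<xi> l + \<theta> * t l) - F \<xi>) / \<theta> - dotk k d t\<bar>
        = \<bar>F (\<lambda>l. \<xi> l + \<theta> * t l) - F \<xi> - \<theta> * dotk k d t\<bar> / \<theta>"
      using \<theta> by simp
    also have "\<dots> \<le> e / (nt + 1) * (\<theta> * nt) / \<theta>"
      using bound \<theta> by (intro divide_right_mono) auto
    also have "\<dots> = e * (nt / (nt + 1))" using \<theta> by simp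
    also have "\<dots> < e" using e nt by (simp add: field_simps)
    finally show "dist ((F (\<lambda>l. \<xi> l + \<theta> * t l) - F \<xi>) / \<theta>) (dotk k d t) < e"
      by (simp add: dist_real_def)
  qed
qed

lemma has_gradk_unique:
  assumes "has_gradk k F d1 \<xi>" "has_gradk k F d2 \<xi>"
  shows "d1 = d2"
proof -
  have "dotk k d1 t = dotk k d2 t" if "t \<in> Rk k" for t
    using has_gradk_directional[OF assms(1) that] has_gradk_directional[OF assms(2) that]
    by (rule tendsto_unique[OF trivial_limit_at_right_real])
  moreover have R: "d1 \<in> Rk k" "d2 \<in> Rk k" using assms unfolding has_gradk_def by auto
  moreover have w: "(\<lambda>l. d1 l - d2 l) \<in> Rk k" using R by (simp add: Rk_def)
  ultimately have "dotk k (\<lambda>l. d1 l - d2 l) (\<lambda>l. d1 l - d2 l) = 0"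
    by (simp add: dotk_commute[of k "\<lambda>l. d1 l - d2 l"] dotk_diff_right)
  from dotk_self_eq_0_imp_eq_0[OF w this] show ?thesis by (simp add: fun_eq_iff)
qed

lemma convex_fun_k_gradient_inequality:
  assumes cvx: "convex_fun_k E V" and E: "E \<subseteq> Rk k" and \<eta>: "\<eta> \<in> E" and \<xi>: "\<xi> \<in> E"
    and grad: "has_gradk k V d \<eta>"
  shows "dotk k d \<xi> - dotk k d \<eta> \<le> V \<xi> - V \<eta>"
proof -
  define t where "t = (\<lambda>l. \<xi> l - \<eta> l)"
  have t: "t \<in> Rk k" using subsetD[OF E \<xi>] subsetD[OF E \<eta>] by (simp add: Rk_def t_def)
  have "\<forall>\<^sub>F \<theta> in at_right 0. \<theta> \<in> {0<..<1::real}" by (rule eventually_at_right_real) simp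
  then have "\<forall>\<^sub>F \<theta> in at_right 0. (V (\<lambda>l. \<eta> l + \<theta> * t l) - V \<eta>) / \<theta> \<le> V \<xi> - V \<eta>"
  proof (rule eventually_mono)
    fix \<theta> :: real assume \<theta>: "\<theta> \<in> {0<..<1}"
    have "(\<lambda>l. \<eta> l + \<theta> * t l) = (\<lambda>l. \<theta> * \<xi> l + (1 - \<theta>) * \<eta> l)"
      by (auto simp: t_def algebra_simps)
    then have "V (\<lambda>l. \<eta> l + \<theta> * t l) \<le> \<theta> * V \<xi> + (1 - \<theta>) * V \<eta>"
      using cvx \<xi> \<eta> \<theta> unfolding convex_fun_k_def by auto
    then show "(V (\<lambda>l. \<eta> l + \<theta> * t l) - V \<eta>) / \<theta> \<le> V \<xi> - V \<eta>"
      using \<theta> by (simp add: field_simps)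
  qed
  from tendsto_upperbound[OF has_gradk_directional[OF grad t] this]
  show ?thesis by (simp add: t_def dotk_diff_right)
qed

lemma fenchel_young_inequality:
  assumes can: "canonical k E Es V dV" and cvx: "convex_fun_k E V"
    and \<xi>: "\<xi> \<in> E" and \<sigma>: "\<sigma> \<in> Es"
  shows "dotk k \<xi> \<sigma> - legendre_conj k E dV V \<sigma> \<le> V \<xi>"
proof -
  define \<eta> where "\<eta> = inv_into E dV \<sigma>"
  have "\<sigma> \<in> dV ` E" using can \<sigma> unfolding canonical_def bij_betw_def by blast
  then have \<eta>: "\<eta> \<in> E" "dV \<eta> = \<sigma>" unfolding \<eta>_def by (rule inv_into_into, rule f_inv_into_f)
  have E: "E \<subseteq> Rk k" using can unfolding canonical_def openk_def by blast
  have "has_gradk k V (dV \<eta>) \<eta>" using can \<eta>(1) unfolding canonical_def by blast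
  with \<eta>(2) have "has_gradk k V \<sigma> \<eta>" by simp
  from convex_fun_k_gradient_inequality[OF cvx E \<eta>(1) \<xi> this]
  show ?thesis unfolding legendre_conj_def Let_def \<eta>_def[symmetric] by (simp add: dotk_commute)
qed

lemma fenchel_young_equality:
  assumes can: "canonical k E Es V dV" and \<sigma>: "\<sigma> \<in> Es"
    and grad: "has_gradk k (legendre_conj k E dV V) \<xi> \<sigma>"
  shows "dotk k \<xi> \<sigma> - legendre_conj k E dV V \<sigma> = V \<xi>"
proof -
  have "\<xi> = inv_into E dV \<sigma>"
    using has_gradk_unique[OF grad] can \<sigma> unfolding canonical_def by blast
  then show ?thesis unfolding legendre_conj_def Let_def by (simp add: dotk_commute)
qed

section \<open>The total complementarity function\<close>

locale canonical_dual_data =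
  fixes A :: "real^'n::finite^'n" and c :: "real^'n"
    and m p kf :: nat and Lf :: "'n qmap"
    and Ef :: "(nat \<Rightarrow> real) set" and dVf :: "(nat \<Rightarrow> real) \<Rightarrow> (nat \<Rightarrow> real)"
    and Vf :: "(nat \<Rightarrow> real) \<Rightarrow> real"
    and kg :: "nat \<Rightarrow> nat" and Lg :: "nat \<Rightarrow> 'n qmap" and Eg :: "nat \<Rightarrow> (nat \<Rightarrow> real) set"
    and dVg :: "nat \<Rightarrow> (nat \<Rightarrow> real) \<Rightarrow> (nat \<Rightarrow> real)" and Vg :: "nat \<Rightarrow> (nat \<Rightarrow> real) \<Rightarrow> real"
    and kh :: "nat \<Rightarrow> nat" and Lh :: "nat \<Rightarrow> 'n qmap" and Eh :: "nat \<Rightarrow> (nat \<Rightarrow> real) set"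
    and dVh :: "nat \<Rightarrow> (nat \<Rightarrow> real) \<Rightarrow> (nat \<Rightarrow> real)" and Vh :: "nat \<Rightarrow> (nat \<Rightarrow> real) \<Rightarrow> real"
begin

abbreviation complementarity :: "real^'n \<Rightarrow> dualv \<Rightarrow> real" where
  "complementarity \<equiv> Xi1 A c m p kf Lf Ef dVf Vf kg Lg Eg dVg Vg kh Lh Eh dVh Vh"

abbreviation dual_hessian :: "dualv \<Rightarrow> real^'n^'n" where
  "dual_hessian \<equiv> Gmat A m p kf Lf kg Lg kh Lh"

lemma quadratic_fun_complementarity:
  "quadratic_fun (\<lambda>x. complementarity x s) (\<lambda>d. 1/2 * (d \<bullet> (dual_hessian s *v d)))"
proof -
  obtain la \<mu> sf sg sh where s: "s = (la, \<mu>, sf, sg, sh)" by (cases s) auto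
  have "quadratic_fun (\<lambda>x. complementarity x s)
     (\<lambda>d. 1/2 * (d \<bullet> (qhess kf Lf sf *v d)) - 0
       + (\<Sum>i<m. la i * (1/2 * (d \<bullet> (qhess (kg i) (Lg i) (sg i) *v d)) - 0))
       + (\<Sum>j<p. \<mu> j * (1/2 * (d \<bullet> (qhess (kh j) (Lh j) (sh j) *v d)) - 0))
       + 1/2 * (d \<bullet> (A *v d)) - 0)"
    unfolding s Xi1_def prod.case
    by (intro quadratic_fun_diff quadratic_fun_add quadratic_fun_sum quadratic_fun_cmult
        quadratic_fun_dotk_qeval quadratic_fun_quadform quadratic_fun_inner quadratic_fun_const finite_lessThan)
  then show ?thesis
    by (rule quadratic_fun_cong)
      (simp_all add: s Gmat_def quadform_add quadform_sum quadform_scaleR sum_distrib_left algebra_simps)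
qed

lemma complementarity_stationary_imp_min:
  assumes "pos_def (dual_hessian s)" and "stationary complementarity s x"
  shows "complementarity x s \<le> complementarity y s"
proof (rule quadratic_fun_stationary_imp_min[OF quadratic_fun_complementarity])
  show "0 \<le> 1/2 * (d \<bullet> (dual_hessian s *v d))" for d
    using assms(1) unfolding pos_def_def by (cases "d = 0") (auto intro: less_imp_le)
  show "((\<lambda>x. complementarity x s) has_derivative (\<lambda>h. 0)) (at x)"
    using assms(2) unfolding stationary_def .
qed

lemma Pd_complementarity:
  assumes "pos_def (dual_hessian s)" and "stationary complementarity s x"
  shows "Pd complementarity s = complementarity x s"
proof -
  have "stationary complementarity s (SOME x. stationary complementarity s x)"
    using assms(2) by (rule someI)
  then show ?thesis unfolding Pd_def
    using assms complementarity_stationary_imp_min by (metis order_antisym)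
qed

lemma Pd_le_complementarity:
  assumes "s \<in> Sa_plus m p Efs Egs Ehs complementarity dual_hessian"
  shows "Pd complementarity s \<le> complementarity y s"
proof -
  from assms obtain x where "pos_def (dual_hessian s)" and "stationary complementarity s x"
    unfolding Sa_plus_def Sa_def by auto
  then show ?thesis using Pd_complementarity complementarity_stationary_imp_min by simp
qed

end

locale convex_canonical_problem = canonical_dual_data +
  fixes Efs :: "(nat \<Rightarrow> real) set" and Egs Ehs :: "nat \<Rightarrow> (nat \<Rightarrow> real) set"
  assumes can_f: "canonical kf Ef Efs Vf dVf"
    and can_g: "\<forall>i<m. canonical (kg i) (Eg i) (Egs i) (Vg i) (dVg i)"
    and can_h: "\<forall>j<p. canonical (kh j) (Eh j) (Ehs j) (Vh j) (dVh j)"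
    and img_f: "\<forall>x. qeval kf Lf x \<in> Ef"
    and img_g: "\<forall>i<m. \<forall>x. qeval (kg i) (Lg i) x \<in> Eg i"
    and img_h: "\<forall>j<p. \<forall>x. qeval (kh j) (Lh j) x \<in> Eh j"
    and cvx_f: "convex_fun_k Ef Vf"
    and cvx_g: "\<forall>i<m. convex_fun_k (Eg i) (Vg i)"
    and cvx_h: "\<forall>j<p. convex_fun_k (Eh j) (Vh j)"
begin

abbreviation objective where
  "objective x \<equiv> Vf (qeval kf Lf x) + 1/2 * (x \<bullet> (A *v x)) - c \<bullet> x"

abbreviation ineq_constraint where
  "ineq_constraint i x \<equiv> Vg i (qeval (kg i) (Lg i) x)"

abbreviation eq_constraint where
  "eq_constraint j x \<equiv> Vh j (qeval (kh j) (Lh j) x)"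

lemma complementarity_le_objective:
  assumes la: "\<forall>i<m. 0 \<le> la i" and \<mu>: "\<forall>j<p. 0 \<le> \<mu> j"
    and sf: "sf \<in> Efs" and sg: "\<forall>i<m. sg i \<in> Egs i" and sh: "\<forall>j<p. sh j \<in> Ehs j"
    and g: "\<forall>i<m. ineq_constraint i x \<le> 0" and h: "\<forall>j<p. eq_constraint j x = 0"
  shows "complementarity x (la, \<mu>, sf, sg, sh) \<le> objective x"
proof -
  have "dotk kf (qeval kf Lf x) sf - legendre_conj kf Ef dVf Vf sf \<le> Vf (qeval kf Lf x)"
    using fenchel_young_inequality[OF can_f cvx_f] img_f sf by blast
  moreover have "(\<Sum>i<m. la i * (dotk (kg i) (qeval (kg i) (Lg i) x) (sg i)
        - legendre_conj (kg i) (Eg i) (dVg i) (Vg i) (sg i))) \<le> (\<Sum>i<m. la i * ineq_constraint i x)"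
    using fenchel_young_inequality can_g cvx_g img_g sg la by (intro sum_mono mult_left_mono) auto
  moreover have "(\<Sum>i<m. la i * ineq_constraint i x) \<le> 0"
    using la g by (auto intro!: sum_nonpos mult_nonneg_nonpos)
  moreover have "(\<Sum>j<p. \<mu> j * (dotk (kh j) (qeval (kh j) (Lh j) x) (sh j)
        - legendre_conj (kh j) (Eh j) (dVh j) (Vh j) (sh j))) \<le> (\<Sum>j<p. \<mu> j * eq_constraint j x)"
    using fenchel_young_inequality can_h cvx_h img_h sh \<mu> by (intro sum_mono mult_left_mono) auto
  moreover have "(\<Sum>j<p. \<mu> j * eq_constraint j x) = 0" using h by simp
  ultimately show ?thesis unfolding Xi1_def prod.case by linarith
qed

lemma complementarity_eq_objective:
  assumes sf: "sf \<in> Efs" and sg: "\<forall>i<m. sg i \<in> Egs i" and sh: "\<forall>j<p. sh j \<in> Ehs j"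
    and grad_f: "has_gradk kf (legendre_conj kf Ef dVf Vf) (qeval kf Lf x) sf"
    and grad_g: "\<forall>i<m. has_gradk (kg i) (legendre_conj (kg i) (Eg i) (dVg i) (Vg i)) (qeval (kg i) (Lg i) x) (sg i)"
    and grad_h: "\<forall>j<p. has_gradk (kh j) (legendre_conj (kh j) (Eh j) (dVh j) (Vh j)) (qeval (kh j) (Lh j) x) (sh j)"
    and slack: "(\<Sum>i<m. la i * ineq_constraint i x) = 0" and h: "\<forall>j<p. eq_constraint j x = 0"
  shows "complementarity x (la, \<mu>, sf, sg, sh) = objective x"
proof -
  have "dotk kf (qeval kf Lf x) sf - legendre_conj kf Ef dVf Vf sf = Vf (qeval kf Lf x)"
    using fenchel_young_equality[OF can_f sf grad_f] .
  moreover have "(\<Sum>i<m. la i * (dotk (kg i) (qeval (kg i) (Lg i) x) (sg i)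
        - legendre_conj (kg i) (Eg i) (dVg i) (Vg i) (sg i))) = (\<Sum>i<m. la i * ineq_constraint i x)"
    using fenchel_young_equality can_g sg grad_g by (intro sum.cong) auto
  moreover have "(\<Sum>j<p. \<mu> j * (dotk (kh j) (qeval (kh j) (Lh j) x) (sh j)
        - legendre_conj (kh j) (Eh j) (dVh j) (Vh j) (sh j))) = (\<Sum>j<p. \<mu> j * eq_constraint j x)"
    using fenchel_young_equality can_h sh grad_h by (intro sum.cong) auto
  moreover have "(\<Sum>j<p. \<mu> j * eq_constraint j x) = 0" using h by simp
  ultimately show ?thesis using slack unfolding Xi1_def prod.case by linarith
qed

lemma Sa_plus_complementarity_le_objective:
  assumes s: "s \<in> Sa_plus m p Efs Egs Ehs complementarity dual_hessian"
    and g: "\<forall>i<m. ineq_constraint i x \<le> 0" and h: "\<forall>j<p. eq_constraint j x = 0"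
  shows "complementarity x s \<le> objective x"
proof -
  obtain la \<mu> sf sg sh where s_eq: "s = (la, \<mu>, sf, sg, sh)" by (cases s)
  have "\<forall>i<m. 0 \<le> la i" "\<forall>j<p. 0 \<le> \<mu> j" "sf \<in> Efs" "\<forall>i<m. sg i \<in> Egs i" "\<forall>j<p. sh j \<in> Ehs j"
    using s unfolding s_eq Sa_plus_def Sa_def by (auto intro: less_imp_le)
  from complementarity_le_objective[OF this g h] show ?thesis unfolding s_eq .
qed

end

theorem theorem2:
  fixes A :: "real^'n::finite^'n" and c :: "real^'n"
    and m p kf :: nat and kg kh :: "nat \<Rightarrow> nat"
    and Lf :: "'n qmap" and Lg Lh :: "nat \<Rightarrow> 'n qmap"
    and Ef Efs :: "(nat \<Rightarrow> real) set" and Vf :: "(nat \<Rightarrow> real) \<Rightarrow> real"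
    and dVf :: "(nat \<Rightarrow> real) \<Rightarrow> (nat \<Rightarrow> real)"
    and Eg Egs Eh Ehs :: "nat \<Rightarrow> (nat \<Rightarrow> real) set"
    and Vg Vh :: "nat \<Rightarrow> (nat \<Rightarrow> real) \<Rightarrow> real"
    and dVg dVh :: "nat \<Rightarrow> (nat \<Rightarrow> real) \<Rightarrow> (nat \<Rightarrow> real)"
    and f :: "real^'n \<Rightarrow> real" and g h :: "nat \<Rightarrow> real^'n \<Rightarrow> real"
    and Xi :: "real^'n \<Rightarrow> dualv \<Rightarrow> real" and G :: "dualv \<Rightarrow> real^'n^'n"
    and Xa :: "(real^'n) set"
    and xb :: "real^'n"
    and lb mub sfb :: "nat \<Rightarrow> real" and sgb shb :: "nat \<Rightarrow> nat \<Rightarrow> real"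
  defines "f \<equiv> \<lambda>x. Vf (qeval kf Lf x) + (1/2) * (x \<bullet> (A *v x)) - c \<bullet> x"
    and "g \<equiv> \<lambda>i x. Vg i (qeval (kg i) (Lg i) x)"
    and "h \<equiv> \<lambda>j x. Vh j (qeval (kh j) (Lh j) x)"
    and "Xa \<equiv> {x. (\<forall>i<m. g i x \<le> 0) \<and> (\<forall>j<p. h j x = 0)}"
    and "Xi \<equiv> Xi1 A c m p kf Lf Ef dVf Vf kg Lg Eg dVg Vg kh Lh Eh dVh Vh"
    and "G \<equiv> Gmat A m p kf Lf kg Lg kh Lh"
  assumes A_sym: "transpose A = A"
    and can_f: "canonical kf Ef Efs Vf dVf"
    and can_g: "\<forall>i<m. canonical (kg i) (Eg i) (Egs i) (Vg i) (dVg i)"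
    and can_h: "\<forall>j<p. canonical (kh j) (Eh j) (Ehs j) (Vh j) (dVh j)"
    and img_f: "\<forall>x. qeval kf Lf x \<in> Ef"
    and img_g: "\<forall>i<m. \<forall>x. qeval (kg i) (Lg i) x \<in> Eg i"
    and img_h: "\<forall>j<p. \<forall>x. qeval (kh j) (Lh j) x \<in> Eh j"
    and cvx_f: "convex_fun_k Ef Vf"
    and cvx_g: "\<forall>i<m. convex_fun_k (Eg i) (Vg i)"
    and cvx_h: "\<forall>j<p. convex_fun_k (Eh j) (Vh j)"
    and crit1: "stationary Xi (lb, mub, sfb, sgb, shb) xb"
    and crit2f: "has_gradk kf (legendre_conj kf Ef dVf Vf) (qeval kf Lf xb) sfb"
    and crit2g: "\<forall>i<m. has_gradk (kg i) (legendre_conj (kg i) (Eg i) (dVg i) (Vg i)) (qeval (kg i) (Lg i) xb) (sgb i)"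
    and crit2h: "\<forall>j<p. has_gradk (kh j) (legendre_conj (kh j) (Eh j) (dVh j) (Vh j)) (qeval (kh j) (Lh j) xb) (shb j)"
    and crit3: "(\<forall>j<p. h j xb = 0) \<and> (\<forall>i<m. lb i \<ge> 0) \<and> (\<forall>i<m. g i xb \<le> 0)
                \<and> (\<Sum>i<m. lb i * g i xb) = 0"
    and in_Sa_plus: "(lb, mub, sfb, sgb, shb) \<in> Sa_plus m p Efs Egs Ehs Xi G"
    and Sa_plus_convex: "convex_dual (Sa_plus m p Efs Egs Ehs Xi G)"
  shows "(\<forall>s\<in>Sa_plus m p Efs Egs Ehs Xi G. Pd Xi s \<le> Pd Xi (lb, mub, sfb, sgb, shb))
       \<and> xb \<in> Xa \<and> (\<forall>x\<in>Xa. f xb \<le> f x)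
       \<and> f xb = Pd Xi (lb, mub, sfb, sgb, shb)"
proof -
  interpret P: convex_canonical_problem A c m p kf Lf Ef dVf Vf kg Lg Eg dVg Vg kh Lh Eh dVh Vh Efs Egs Ehs
    by unfold_locales (fact can_f can_g can_h img_f img_g img_h cvx_f cvx_g cvx_h)+
  have Pd_le: "Pd Xi s \<le> Xi y s" if "s \<in> Sa_plus m p Efs Egs Ehs Xi G" for s y
    using that unfolding Xi_def G_def by (rule P.Pd_le_complementarity)
  have weak_duality: "Xi x s \<le> f x" if "s \<in> Sa_plus m p Efs Egs Ehs Xi G" and "x \<in> Xa" for s x
    using P.Sa_plus_complementarity_le_objective that unfolding Xa_def Xi_def G_def f_def g_def h_def
    by simp
  let ?sb = "(lb, mub, sfb, sgb, shb)"
  have sb: "sfb \<in> Efs" "\<forall>i<m. sgb i \<in> Egs i" "\<forall>j<p. shb j \<in> Ehs j" "pos_def (G ?sb)"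
    using in_Sa_plus unfolding Sa_plus_def Sa_def by auto
  have xb: "xb \<in> Xa" using crit3 unfolding Xa_def by simp
  have "Xi xb ?sb = f xb"
    using P.complementarity_eq_objective[OF sb(1-3) crit2f crit2g crit2h, of lb mub] crit3
    unfolding Xi_def f_def g_def h_def by simp
  moreover have "Pd Xi ?sb = Xi xb ?sb"
    using P.Pd_complementarity sb(4) crit1 unfolding Xi_def G_def by blast
  ultimately have Pd_sb: "Pd Xi ?sb = f xb" by simp
  have "Pd Xi s \<le> Pd Xi ?sb" if "s \<in> Sa_plus m p Efs Egs Ehs Xi G" for s
    using Pd_le[OF that, of xb] weak_duality[OF that xb] Pd_sb by simp
  moreover have "f xb \<le> f x" if "x \<in> Xa" for x
    using Pd_le[OF in_Sa_plus, of x] weak_duality[OF in_Sa_plus that] Pd_sb by simp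
  ultimately show ?thesis using xb Pd_sb by simp
qed

end
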